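(* Let $\xi_1,\xi_2$ be real trigonometric polynomials of degree $k$, let $\mathbf{C}=\{\xi(\varphi)=(\xi_1(\varphi),\xi_2(\varphi)):\varphi\in\mathrm{S}^1\}\subset\mathbb{R}^2$ be the corresponding trigonometric curve, and let $H$ be the set of points hyperbolic with respect to $\mathbf{C}$. Put $\theta(x,\varphi)=|x-\xi(\varphi)|^2$. Then for arbitrary $x,y\in H$ with $x\ne y$, all roots in $\mathbb{C}/2\pi\mathbb{Z}$ of the trigonometric polynomial $\varphi\mapsto\theta(x,\varphi)-\theta(y,\varphi)$ (of degree at most $k$) are real.
   Context: A real trigonometric polynomial of degree $k$ is $\sum_{j=0}^k(a_j\cos j\varphi+b_j\sin j\varphi)$ with real coefficients and $(a_k,b_k)\ne(0,0)$, viewed as a holomorphic function on $\mathbb{C}/2\pi\mathbb{Z}$. A point $x\in\mathbb{R}^2$ is hyperbolic with respect to $\mathbf{C}$ if every straight line through $x$ meets $\mathbf{C}$ at $2k$ points counted with multiplicities (i.e. for every line $L=\{z:\langle u,z\rangle=c\}$ through $x$, the trigonometric polynomial $\langle u,\xi(\varphi)\rangle-c$ has $2k$ real roots counted with multiplicity). $|\cdot|$ is the Euclidean norm. *)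

theory Defs
  imports "HOL-Complex_Analysis.Complex_Analysis"
begin

text \<open>A real trigonometric polynomial with coefficients a j, b j (j \<le> k),
  extended holomorphically to complex arguments (so it is a holomorphic
  function on C / 2 pi Z).\<close>
definition trig_poly :: "(nat \<Rightarrow> real) \<Rightarrow> (nat \<Rightarrow> real) \<Rightarrow> nat \<Rightarrow> complex \<Rightarrow> complex" where
  "trig_poly a b k z =
     (\<Sum>j\<le>k. complex_of_real (a j) * cos (of_nat j * z) + complex_of_real (b j) * sin (of_nat j * z))"

definition has_trig_degree :: "(nat \<Rightarrow> real) \<Rightarrow> (nat \<Rightarrow> real) \<Rightarrow> nat \<Rightarrow> bool" where
  "has_trig_degree a b k \<longleftrightarrow> (a k, b k) \<noteq> (0, 0)"

definition real_roots :: "(complex \<Rightarrow> complex) \<Rightarrow> real set" where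
  "real_roots f = {\<phi>. 0 \<le> \<phi> \<and> \<phi> < 2 * pi \<and> f (complex_of_real \<phi>) = 0}"

definition real_root_count :: "(complex \<Rightarrow> complex) \<Rightarrow> nat" where
  "real_root_count f = (\<Sum>\<phi>\<in>real_roots f. nat (zorder f (complex_of_real \<phi>)))"

text \<open>The curve xi = (xi1, xi2), xi1 = trig_poly a1 b1 k, xi2 = trig_poly a2 b2 k.
  x is hyperbolic iff for every line L = {z. u \<bullet> z = u \<bullet> x} (u \<noteq> 0) through x,
  the trigonometric polynomial u \<bullet> xi(phi) - u \<bullet> x has exactly 2k real roots
  counted with multiplicity.\<close>
definition hyperbolic_pt ::
  "(nat \<Rightarrow> real) \<Rightarrow> (nat \<Rightarrow> real) \<Rightarrow> (nat \<Rightarrow> real) \<Rightarrow> (nat \<Rightarrow> real) \<Rightarrow> nat \<Rightarrow> real \<times> real \<Rightarrow> bool" where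
  "hyperbolic_pt a1 b1 a2 b2 k x \<longleftrightarrow>
     (\<forall>u::real \<times> real. u \<noteq> 0 \<longrightarrow>
        (let g = (\<lambda>z. complex_of_real (fst u) * trig_poly a1 b1 k z
                     + complex_of_real (snd u) * trig_poly a2 b2 k z
                     - complex_of_real (u \<bullet> x))
         in finite (real_roots g) \<and> real_root_count g = 2 * k))"

definition theta ::
  "(nat \<Rightarrow> real) \<Rightarrow> (nat \<Rightarrow> real) \<Rightarrow> (nat \<Rightarrow> real) \<Rightarrow> (nat \<Rightarrow> real) \<Rightarrow> nat \<Rightarrow> real \<times> real \<Rightarrow> complex \<Rightarrow> complex" where
  "theta a1 b1 a2 b2 k x z =
     (complex_of_real (fst x) - trig_poly a1 b1 k z)^2 + (complex_of_real (snd x) - trig_poly a2 b2 k z)^2"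


end

(*
  Put u = x - y and h(\<phi>) = \<langle>u, \<xi>(\<phi>)\<rangle>. Then \<theta>(x, \<phi>) - \<theta>(y, \<phi>) = \<langle>u, x + y\<rangle> - 2 h(\<phi>), so its
  roots are the solutions of h = c, where c is the midpoint of a = \<langle>u, y\<rangle> < b = \<langle>u, x\<rangle>.
  Hyperbolicity of x and y says that h - b and h - a both have 2k real roots counted with
  multiplicity. A root of order m is a critical point of order m - 1, and by Rolle's theorem every
  gap between consecutive roots contains a further critical point; together these are already 2k
  critical points, the most that h' (a trigonometric polynomial of degree k) can have on the circle.
  Hence every critical point of h is simple and, using both levels, is a strict local maximum with
  value at least b or a strict local minimum with value at most a. So h crosses the level c in each
  of the 2k gaps between consecutive critical points, and h - c, which has at most 2k zeros in
  \<complex>/2\<pi>\<int>, has no non-real ones.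
*)

theory Submission
  imports Defs "HOL-Computational_Algebra.Polynomial"
begin

section \<open>Trigonometric polynomials as Laurent polynomials in \<open>e\<^sup>i\<^sup>z\<close>\<close>

definition trig_poly_lift :: "(nat \<Rightarrow> real) \<Rightarrow> (nat \<Rightarrow> real) \<Rightarrow> nat \<Rightarrow> complex poly" where
  "trig_poly_lift a b k =
     (\<Sum>j\<le>k. monom ((of_real (a j) - \<i> * of_real (b j)) / 2) (k + j)
            + monom ((of_real (a j) + \<i> * of_real (b j)) / 2) (k - j))"

lemma exp_power_cos_sin_combination:
  fixes E w :: complex and A B :: real
  assumes E: "E = exp (\<i> * w)" and "j \<le> k"
  shows "E ^ k * (of_real A * cos (of_nat j * w) + of_real B * sin (of_nat j * w))
     = (of_real A - \<i> * of_real B) / 2 * E ^ (k + j) + (of_real A + \<i> * of_real B) / 2 * E ^ (k - j)"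
proof -
  have "E \<noteq> 0" using E by simp
  have Ej: "exp (\<i> * (of_nat j * w)) = E ^ j"
    using E by (metis exp_of_nat_mult mult.left_commute)
  have Ej': "exp (- (\<i> * (of_nat j * w))) = inverse (E ^ j)"
    using Ej by (simp add: exp_minus)
  have Ekj: "E ^ (k - j) = E ^ k / E ^ j"
    using \<open>E \<noteq> 0\<close> \<open>j \<le> k\<close> by (simp add: power_diff)
  show ?thesis
    unfolding cos_exp_eq sin_exp_eq Ej Ej' Ekj power_add using \<open>E \<noteq> 0\<close> by (simp add: field_simps)
qed

lemma poly_trig_poly_lift:
  "poly (trig_poly_lift a b k) (exp (\<i> * z)) = exp (\<i> * z) ^ k * trig_poly a b k z"
  unfolding trig_poly_def trig_poly_lift_def poly_sum sum_distrib_left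
  by (intro sum.cong refl) (simp add: exp_power_cos_sin_combination poly_monom)

lemma trig_poly_eq_lift:
  "trig_poly a b k z = exp (- (of_nat k * (\<i> * z))) * poly (trig_poly_lift a b k) (exp (\<i> * z))"
  by (simp add: poly_trig_poly_lift exp_minus exp_of_nat_mult)

lemma degree_trig_poly_lift: "degree (trig_poly_lift a b k) \<le> 2 * k"
  by (rule degree_le) (auto simp: trig_poly_lift_def coeff_sum coeff_monom intro!: sum.neutral)

lemma trig_poly_lift_nonzero:
  assumes "trig_poly a b k z0 \<noteq> 0"
  shows "trig_poly_lift a b k \<noteq> 0"
  using assms by (auto simp: trig_poly_eq_lift)

lemma holomorphic_on_poly [holomorphic_intros]:
  "f holomorphic_on A \<Longrightarrow> (\<lambda>z. poly (p :: complex poly) (f z)) holomorphic_on A"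
  by (induction p) (auto intro!: holomorphic_intros)

lemma analytic_on_poly [analytic_intros]:
  "f analytic_on A \<Longrightarrow> (\<lambda>z. poly (p :: complex poly) (f z)) analytic_on A"
  by (induction p) (auto intro!: analytic_intros)

lemma zorder_poly:
  fixes p :: "complex poly"
  assumes "p \<noteq> 0"
  shows "zorder (poly p) w = int (order w p)"
proof -
  obtain q where q: "p = [:- w, 1:] ^ order w p * q" "\<not> [:- w, 1:] dvd q"
    using order_decomp[OF assms] by blast
  have "poly q w \<noteq> 0" using q(2) by (simp add: poly_eq_0_iff_dvd)
  show ?thesis
  proof (rule zorder_eqI[where S = UNIV and g = "poly q"])
    show "poly p x = poly q x * (x - w) powi int (order w p)" for x
      by (subst q(1)) (simp add: power_int_of_nat mult.commute)
  qed (use \<open>poly q w \<noteq> 0\<close> in \<open>auto intro!: holomorphic_intros\<close>)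
qed

lemma trig_poly_holomorphic [holomorphic_intros]: "trig_poly a b k holomorphic_on A"
  unfolding trig_poly_def by (auto intro!: holomorphic_intros)

lemma trig_poly_analytic [analytic_intros]: "trig_poly a b k analytic_on A"
  unfolding trig_poly_def by (auto intro!: analytic_intros)

lemma eventually_nonzero_trig_poly:
  assumes "trig_poly a b k z0 \<noteq> 0"
  shows "\<forall>\<^sub>F w in at z. trig_poly a b k w \<noteq> 0"
  using non_zero_neighbour_alt[of "trig_poly a b k" UNIV z z0, OF _ _ _ _ _ assms]
  by (auto intro!: holomorphic_intros)

lemma zorder_exp_minus_const: "zorder (\<lambda>w. exp (\<i> * w) - exp (\<i> * z)) z = 1"
proof -
  have "deriv (\<lambda>w. exp (\<i> * w) - exp (\<i> * z)) z = \<i> * exp (\<i> * z)"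
    by (rule DERIV_imp_deriv) (auto intro!: derivative_eq_intros)
  then show ?thesis
    by (intro zorder_zero_eqI') (auto intro!: analytic_intros)
qed

lemma zorder_trig_poly:
  assumes "trig_poly a b k z0 \<noteq> 0"
  shows "zorder (trig_poly a b k) z = int (order (exp (\<i> * z)) (trig_poly_lift a b k))"
proof -
  define P where "P = trig_poly_lift a b k"
  have "P \<noteq> 0" using trig_poly_lift_nonzero[OF assms] by (simp add: P_def)
  have eq: "trig_poly a b k = (\<lambda>w. exp (- (of_nat k * (\<i> * w))) * (poly P \<circ> (\<lambda>w. exp (\<i> * w))) w)"
    by (simp add: fun_eq_iff trig_poly_eq_lift P_def)
  have "zorder (trig_poly a b k) z
      = zorder (\<lambda>w. exp (- (of_nat k * (\<i> * w)))) z + zorder (poly P \<circ> (\<lambda>w. exp (\<i> * w))) z"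
    unfolding eq
    by (rule zorder_times_analytic)
       (use eventually_nonzero_trig_poly[OF assms, of z] in \<open>auto intro!: analytic_intros simp: eq\<close>)
  also have "zorder (\<lambda>w. exp (- (of_nat k * (\<i> * w)))) z = 0"
    by (rule zorder_eq_0I) (auto intro!: analytic_intros)
  also have "zorder (poly P \<circ> (\<lambda>w. exp (\<i> * w))) z
      = zorder (poly P) (exp (\<i> * z)) * zorder (\<lambda>w. exp (\<i> * w) - exp (\<i> * z)) z"
  proof (rule zorder_compose')
    have "poly P (exp (\<i> * z0)) \<noteq> 0"
      using assms by (simp add: trig_poly_eq_lift P_def)
    then show "\<forall>\<^sub>F w in at (exp (\<i> * z)). poly P w \<noteq> 0"
      using non_zero_neighbour_alt[of "poly P" UNIV "exp (\<i> * z)"]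
        holomorphic_on_poly[of "\<lambda>w. w" UNIV P] by auto
    have "exp (\<i> * (z + pi)) \<noteq> exp (\<i> * z)"
      by (simp add: distrib_left exp_add)
    moreover have "(\<lambda>w. exp (\<i> * w) - exp (\<i> * z)) holomorphic_on UNIV"
      by (intro holomorphic_intros)
    ultimately show "\<forall>\<^sub>F w in at z. exp (\<i> * w) \<noteq> exp (\<i> * z)"
      using non_zero_neighbour_alt[of "\<lambda>w. exp (\<i> * w) - exp (\<i> * z)" UNIV z "z + pi"] by auto
  qed (auto intro!: analytic_intros isolated_singularity_at_analytic not_essential_analytic)
  also have "\<dots> = int (order (exp (\<i> * z)) P)"
    by (simp add: zorder_poly[OF \<open>P \<noteq> 0\<close>] zorder_exp_minus_const)
  finally show ?thesis by (simp add: P_def)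
qed

lemma zorder_trig_poly_pos_iff:
  assumes "trig_poly a b k z0 \<noteq> 0"
  shows "zorder (trig_poly a b k) z > 0 \<longleftrightarrow> trig_poly a b k z = 0"
  using trig_poly_lift_nonzero[OF assms]
  by (simp add: zorder_trig_poly[OF assms] order_root trig_poly_eq_lift)

lemma sum_zorder_trig_poly_le:
  assumes nz: "trig_poly a b k z0 \<noteq> 0" and "finite S" and inj: "inj_on (\<lambda>z. exp (\<i> * z)) S"
  shows "(\<Sum>z\<in>S. zorder (trig_poly a b k) z) \<le> 2 * int k"
proof -
  define P where "P = trig_poly_lift a b k"
  define E where "E = (\<lambda>z::complex. exp (\<i> * z))"
  have "P \<noteq> 0" using trig_poly_lift_nonzero[OF nz] by (simp add: P_def)
  have "(\<Sum>z\<in>S. zorder (trig_poly a b k) z) = int (\<Sum>z\<in>S. order (E z) P)"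
    by (simp add: zorder_trig_poly[OF nz] P_def E_def)
  also have "(\<Sum>z\<in>S. order (E z) P) = (\<Sum>w\<in>E ` S. order w P)"
    using inj by (simp add: sum.reindex E_def)
  also have "\<dots> = (\<Sum>w\<in>E ` S \<inter> {w. poly P w = 0}. order w P)"
    by (rule sum.mono_neutral_right) (use \<open>finite S\<close> \<open>P \<noteq> 0\<close> in \<open>auto simp: order_root\<close>)
  also have "\<dots> \<le> (\<Sum>w | poly P w = 0. order w P)"
    by (rule sum_mono2) (use \<open>P \<noteq> 0\<close> poly_roots_finite in auto)
  also have "\<dots> \<le> degree P" by (rule sum_order_le_degree[OF \<open>P \<noteq> 0\<close>])
  also have "\<dots> \<le> 2 * k" using degree_trig_poly_lift by (simp add: P_def)
  finally show ?thesis by linarith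
qed

lemma inj_on_exp_window: "inj_on (\<lambda>z. exp (\<i> * z)) (complex_of_real ` {l..<l + 2 * pi})"
proof (rule inj_onI)
  fix x y assume "x \<in> complex_of_real ` {l..<l + 2 * pi}" "y \<in> complex_of_real ` {l..<l + 2 * pi}"
    and e: "exp (\<i> * x) = exp (\<i> * y)"
  then obtain s t where st: "x = of_real s" "y = of_real t" "\<bar>s - t\<bar> < 2 * pi"
    by auto
  from e obtain n where "\<i> * x = \<i> * y + complex_of_real (real_of_int (2 * n) * pi) * \<i>"
    by (auto simp: exp_eq)
  then have "\<i> * (x - y - complex_of_real (real_of_int (2 * n) * pi)) = 0"
    by (simp add: algebra_simps)
  then have "s - t = real_of_int (2 * n) * pi"
    using st by (metis complex_i_not_zero eq_iff_diff_eq_0 mult_eq_0_iff of_real_diff of_real_eq_iff)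
  then have "\<bar>real_of_int n\<bar> < 1"
    using st(3) by (simp add: abs_mult)
  then have "n = 0" by linarith
  then show "x = y" using \<open>s - t = _\<close> st by simp
qed

lemma exp_nonreal_neq_exp_real:
  assumes "Im z \<noteq> 0"
  shows "exp (\<i> * z) \<noteq> exp (\<i> * complex_of_real s)"
proof
  assume "exp (\<i> * z) = exp (\<i> * complex_of_real s)"
  then have "norm (exp (\<i> * z)) = 1" by (simp add: norm_exp_eq_Re)
  then show False using assms by (simp add: norm_exp_eq_Re)
qed

lemma trig_poly_zero_real_if_many_real_zeros:
  assumes nonzero: "trig_poly a b k z0 \<noteq> 0"
    and Y: "finite Y" "Y \<subseteq> {l..<l + 2 * pi}" "2 * k \<le> card Y"
    and zeros: "\<forall>s\<in>Y. trig_poly a b k (of_real s) = 0" and "trig_poly a b k z = 0"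
  shows "Im z = 0"
proof (rule ccontr)
  assume "Im z \<noteq> 0"
  define S where "S = insert z (complex_of_real ` Y)"
  have "z \<notin> complex_of_real ` Y" using \<open>Im z \<noteq> 0\<close> by auto
  then have "card S = card Y + 1"
    using Y(1) by (simp add: S_def card_image inj_on_def)
  have "inj_on (\<lambda>w. exp (\<i> * w)) S"
    using inj_on_subset[OF inj_on_exp_window image_mono[OF Y(2)]] exp_nonreal_neq_exp_real[OF \<open>Im z \<noteq> 0\<close>]
    by (auto simp: S_def)
  then have "(\<Sum>w\<in>S. zorder (trig_poly a b k) w) \<le> 2 * int k"
    using Y(1) by (intro sum_zorder_trig_poly_le[OF nonzero]) (simp add: S_def)
  moreover have "(\<Sum>w\<in>S. zorder (trig_poly a b k) w) \<ge> (\<Sum>w\<in>S. 1)"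
    using zeros \<open>trig_poly a b k z = 0\<close> zorder_trig_poly_pos_iff[OF nonzero]
    by (intro sum_mono) (force simp: S_def)
  ultimately show False using \<open>card S = card Y + 1\<close> Y(3) by simp
qed

lemma trig_poly_periodic:
  "trig_poly a b k (z + complex_of_real (2 * pi * of_int n)) = trig_poly a b k z"
proof -
  have exp_2pi: "exp (complex_of_real (2 * pi * of_int m) * \<i>) = 1" for m :: int
    using exp_integer_2pi[of "of_int m"] by (simp add: mult_ac)
  have "exp (\<i> * (z + complex_of_real (2 * pi * of_int n))) = exp (\<i> * z)"
    using exp_2pi[of n] by (simp add: distrib_left exp_add mult_ac)
  moreover have "- (of_nat k * (\<i> * (z + complex_of_real (2 * pi * of_int n))))
      = - (of_nat k * (\<i> * z)) + complex_of_real (2 * pi * of_int (- int k * n)) * \<i>"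
    by (simp add: algebra_simps)
  then have "exp (- (of_nat k * (\<i> * (z + complex_of_real (2 * pi * of_int n)))))
      = exp (- (of_nat k * (\<i> * z)))"
    by (simp only: exp_add exp_2pi mult_1_right)
  ultimately show ?thesis by (simp add: trig_poly_eq_lift)
qed

lemma zorder_trig_poly_periodic:
  "zorder (trig_poly a b k) (z + complex_of_real (2 * pi * of_int n)) = zorder (trig_poly a b k) z"
proof -
  have "zorder (trig_poly a b k) (z + complex_of_real (2 * pi * of_int n))
      = zorder (\<lambda>u. trig_poly a b k (u + (z + complex_of_real (2 * pi * of_int n)))) 0"
    by (rule zorder_shift)
  also have "(\<lambda>u. trig_poly a b k (u + (z + complex_of_real (2 * pi * of_int n))))
      = (\<lambda>u. trig_poly a b k (u + z))"
    using trig_poly_periodic[of a b k] by (simp add: add.assoc[symmetric])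
  finally show ?thesis by (simp add: zorder_shift[symmetric])
qed

definition real_trig_poly :: "(nat \<Rightarrow> real) \<Rightarrow> (nat \<Rightarrow> real) \<Rightarrow> nat \<Rightarrow> real \<Rightarrow> real" where
  "real_trig_poly a b k t = (\<Sum>j\<le>k. a j * cos (real j * t) + b j * sin (real j * t))"

lemma trig_poly_of_real: "trig_poly a b k (of_real t) = of_real (real_trig_poly a b k t)"
  unfolding trig_poly_def real_trig_poly_def by (simp add: cos_of_real[symmetric] sin_of_real[symmetric])

lemma real_trig_poly_periodic: "real_trig_poly a b k (t + 2 * pi * of_int n) = real_trig_poly a b k t"
proof -
  have "complex_of_real (t + 2 * pi * of_int n) = of_real t + of_real (2 * pi * of_int n)"
    by simp
  then have "complex_of_real (real_trig_poly a b k (t + 2 * pi * of_int n)) = of_real (real_trig_poly a b k t)"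
    using trig_poly_periodic[of a b k "of_real t" n] by (simp only: trig_poly_of_real[symmetric])
  then show ?thesis by (simp only: of_real_eq_iff)
qed

lemma real_trig_poly_periodic_2pi: "real_trig_poly a b k (t + 2 * pi) = real_trig_poly a b k t"
  using real_trig_poly_periodic[of a b k t 1] by simp

lemma isCont_real_trig_poly: "isCont (real_trig_poly a b k) t"
  unfolding real_trig_poly_def by (auto intro!: continuous_intros)

lemma continuous_on_real_trig_poly: "continuous_on A (real_trig_poly a b k)"
  unfolding real_trig_poly_def by (auto intro!: continuous_intros)

definition deriv_cos_coeffs :: "(nat \<Rightarrow> real) \<Rightarrow> nat \<Rightarrow> real" where
  "deriv_cos_coeffs b j = real j * b j"

definition deriv_sin_coeffs :: "(nat \<Rightarrow> real) \<Rightarrow> nat \<Rightarrow> real" where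
  "deriv_sin_coeffs a j = - (real j * a j)"

lemma deriv_sin_coeffs_upd_0 [simp]: "deriv_sin_coeffs (a(0 := c)) = deriv_sin_coeffs a"
  by (auto simp: deriv_sin_coeffs_def)

lemma has_field_derivative_trig_poly:
  "(trig_poly a b k has_field_derivative trig_poly (deriv_cos_coeffs b) (deriv_sin_coeffs a) k z) (at z)"
proof -
  have "((\<lambda>z. \<Sum>j\<le>k. of_real (a j) * cos (of_nat j * z) + of_real (b j) * sin (of_nat j * z))
      has_field_derivative (\<Sum>j\<le>k. of_real (a j) * (- sin (of_nat j * z) * of_nat j)
                                 + of_real (b j) * (cos (of_nat j * z) * of_nat j))) (at z)"
    by (intro DERIV_sum) (auto intro!: derivative_eq_intros)
  then show ?thesis
    unfolding trig_poly_def deriv_cos_coeffs_def deriv_sin_coeffs_def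
    by (simp add: algebra_simps)
qed

lemma deriv_trig_poly: "deriv (trig_poly a b k) = trig_poly (deriv_cos_coeffs b) (deriv_sin_coeffs a) k"
  using has_field_derivative_trig_poly DERIV_imp_deriv by blast

lemma has_real_derivative_real_trig_poly:
  "(real_trig_poly a b k has_real_derivative real_trig_poly (deriv_cos_coeffs b) (deriv_sin_coeffs a) k t) (at t)"
proof -
  have "((\<lambda>t. \<Sum>j\<le>k. a j * cos (real j * t) + b j * sin (real j * t))
      has_real_derivative (\<Sum>j\<le>k. a j * (- sin (real j * t) * real j)
                                + b j * (cos (real j * t) * real j))) (at t)"
    by (intro DERIV_sum) (auto intro!: derivative_eq_intros)
  then show ?thesis
    unfolding real_trig_poly_def deriv_cos_coeffs_def deriv_sin_coeffs_def
    by (simp add: algebra_simps)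
qed

lemma trig_poly_minus_const: "trig_poly a b k z - of_real c = trig_poly (a(0 := a 0 - c)) b k z"
proof -
  have "trig_poly (a(0 := a 0 - c)) b k z = trig_poly a b k z + (\<Sum>j\<le>k. if j = 0 then - of_real c else 0)"
    unfolding trig_poly_def sum.distrib[symmetric] by (intro sum.cong) auto
  then show ?thesis by simp
qed

lemma real_trig_poly_minus_const:
  "real_trig_poly (a(0 := a 0 - c)) b k = (\<lambda>t. real_trig_poly a b k t - c)"
proof
  fix t
  have "complex_of_real (real_trig_poly (a(0 := a 0 - c)) b k t) = of_real (real_trig_poly a b k t - c)"
    by (simp add: trig_poly_of_real[symmetric] trig_poly_minus_const[symmetric])
  then show "real_trig_poly (a(0 := a 0 - c)) b k t = real_trig_poly a b k t - c"
    by (simp only: of_real_eq_iff)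
qed

definition strict_local_max :: "(real \<Rightarrow> real) \<Rightarrow> real \<Rightarrow> bool" where
  "strict_local_max f t \<longleftrightarrow> (\<forall>\<^sub>F s in at t. f s < f t)"

definition strict_local_min :: "(real \<Rightarrow> real) \<Rightarrow> real \<Rightarrow> bool" where
  "strict_local_min f t \<longleftrightarrow> (\<forall>\<^sub>F s in at t. f t < f s)"

lemma not_strict_local_max_and_min:
  assumes "strict_local_max f t" "strict_local_min f t"
  shows False
proof -
  have "\<forall>\<^sub>F s in at t. False"
    using assms unfolding strict_local_max_def strict_local_min_def by eventually_elim simp
  then show False by simp
qed

lemma strict_local_extremum_minus_const [simp]:
  "strict_local_max (\<lambda>s. f s - c) t \<longleftrightarrow> strict_local_max f t"
  "strict_local_min (\<lambda>s. f s - c) t \<longleftrightarrow> strict_local_min f t"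
  by (simp_all add: strict_local_max_def strict_local_min_def)

lemma strict_local_extremum_periodic:
  assumes "\<And>s. f (s + c) = f s"
  shows "strict_local_max f (t + c) \<longleftrightarrow> strict_local_max f t"
    and "strict_local_min f (t + c) \<longleftrightarrow> strict_local_min f t"
proof -
  have "at (t + c) = filtermap (\<lambda>s. s + c) (at t)"
    using filtermap_at_shift[of "- c" t] by simp
  then show "strict_local_max f (t + c) \<longleftrightarrow> strict_local_max f t"
    and "strict_local_min f (t + c) \<longleftrightarrow> strict_local_min f t"
    by (simp_all add: strict_local_max_def strict_local_min_def eventually_filtermap assms)
qed

lemma strict_mono_on_not_extremum:
  assumes "t < n" and mono: "strict_mono_on {t..n} f"
  shows "\<not> strict_local_max f t" and "\<not> strict_local_min f n"
proof -
  have right: "\<forall>\<^sub>F s in at_right t. f t < f s"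
    using eventually_at_right_real[OF \<open>t < n\<close>]
    by eventually_elim (auto intro: monotone_onD[OF mono])
  show "\<not> strict_local_max f t"
  proof
    assume "strict_local_max f t"
    then have "\<forall>\<^sub>F s in at_right t. f s < f t"
      by (simp add: strict_local_max_def eventually_at_split)
    with right have "\<forall>\<^sub>F s in at_right t. False" by eventually_elim simp
    then show False by simp
  qed
  have left: "\<forall>\<^sub>F s in at_left n. f s < f n"
    using eventually_at_left_real[OF \<open>t < n\<close>]
    by eventually_elim (auto intro: monotone_onD[OF mono])
  show "\<not> strict_local_min f n"
  proof
    assume "strict_local_min f n"
    then have "\<forall>\<^sub>F s in at_left n. f n < f s"
      by (simp add: strict_local_min_def eventually_at_split)
    with left have "\<forall>\<^sub>F s in at_left n. False" by eventually_elim simp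
    then show False by simp
  qed
qed

lemma strict_antimono_on_not_extremum:
  assumes "t < n" and "strict_antimono_on {t..n} f"
  shows "\<not> strict_local_min f t" and "\<not> strict_local_max f n"
proof -
  have "strict_mono_on {t..n} (\<lambda>s. - f s)"
    using assms(2) by (auto simp: monotone_on_def)
  moreover have "strict_local_max (\<lambda>s. - f s) u \<longleftrightarrow> strict_local_min f u"
    and "strict_local_min (\<lambda>s. - f s) u \<longleftrightarrow> strict_local_max f u" for u
    by (simp_all add: strict_local_max_def strict_local_min_def)
  ultimately show "\<not> strict_local_min f t" and "\<not> strict_local_max f n"
    using strict_mono_on_not_extremum[OF \<open>t < n\<close>] by metis+
qed

lemma strict_local_maxI:
  assumes "p < t" "t < n" "strict_mono_on {p..t} f" "strict_antimono_on {t..n} f"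
  shows "strict_local_max f t"
  unfolding strict_local_max_def eventually_at_split
proof
  show "\<forall>\<^sub>F s in at_left t. f s < f t"
    using eventually_at_left_real[OF \<open>p < t\<close>]
    by eventually_elim (auto intro: monotone_onD[OF assms(3)])
  show "\<forall>\<^sub>F s in at_right t. f s < f t"
    using eventually_at_right_real[OF \<open>t < n\<close>]
    by eventually_elim (auto intro: monotone_onD[OF assms(4)])
qed

lemma strict_local_minI:
  assumes "p < t" "t < n" "strict_antimono_on {p..t} f" "strict_mono_on {t..n} f"
  shows "strict_local_min f t"
  unfolding strict_local_min_def eventually_at_split
proof
  show "\<forall>\<^sub>F s in at_left t. f t < f s"
    using eventually_at_left_real[OF \<open>p < t\<close>]
    by eventually_elim (auto intro: monotone_onD[OF assms(3)])
  show "\<forall>\<^sub>F s in at_right t. f t < f s"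
    using eventually_at_right_real[OF \<open>t < n\<close>]
    by eventually_elim (auto intro: monotone_onD[OF assms(4)])
qed

lemma DERIV_nonzero_imp_strict_mono_or_antimono:
  fixes f f' :: "real \<Rightarrow> real"
  assumes "a < b" and deriv: "\<And>x. (f has_real_derivative f' x) (at x)"
    and cont: "\<And>x. isCont f' x" and nonzero: "\<And>x. a < x \<Longrightarrow> x < b \<Longrightarrow> f' x \<noteq> 0"
  shows "strict_mono_on {a..b} f \<or> strict_antimono_on {a..b} f"
proof -
  have sign: "(\<forall>x. a < x \<and> x < b \<longrightarrow> f' x > 0) \<or> (\<forall>x. a < x \<and> x < b \<longrightarrow> f' x < 0)"
  proof (rule ccontr)
    assume "\<not> ?thesis"
    then obtain x1 x2 where x: "a < x1" "x1 < b" "a < x2" "x2 < b" "f' x1 \<le> 0" "f' x2 \<ge> 0"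
      by (metis linorder_not_le)
    have "\<exists>z. min x1 x2 \<le> z \<and> z \<le> max x1 x2 \<and> f' z = 0"
      using IVT[of f' x1 0 x2] IVT2[of f' x1 0 x2] x cont by (cases "x1 \<le> x2") auto
    then show False using x nonzero by force
  qed
  have cont_f: "continuous_on {x..y} f" for x y
    using deriv by (meson DERIV_isCont continuous_at_imp_continuous_on)
  from sign show ?thesis
  proof
    assume pos: "\<forall>x. a < x \<and> x < b \<longrightarrow> f' x > 0"
    have "f x < f y" if "a \<le> x" "x < y" "y \<le> b" for x y
      by (rule DERIV_pos_imp_increasing_open[OF \<open>x < y\<close> _ cont_f]) (use pos deriv that in force)
    then show ?thesis by (auto simp: monotone_on_def)
  next
    assume neg: "\<forall>x. a < x \<and> x < b \<longrightarrow> f' x < 0"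
    have "f x > f y" if "a \<le> x" "x < y" "y \<le> b" for x y
      by (rule DERIV_neg_imp_decreasing_open[OF \<open>x < y\<close> _ cont_f]) (use neg deriv that in force)
    then show ?thesis by (auto simp: monotone_on_def)
  qed
qed

definition cyclic_next :: "real set \<Rightarrow> real \<Rightarrow> real" where
  "cyclic_next R p = (if \<exists>q\<in>R. p < q then Min {q\<in>R. p < q} else Min R + 2 * pi)"

locale circle_points =
  fixes R :: "real set"
  assumes finite_points: "finite R" and points_subset: "R \<subseteq> {0..<2 * pi}" and points_nonempty: "R \<noteq> {}"
begin

lemma Min_points_le: "p \<in> R \<Longrightarrow> Min R \<le> p"
  using finite_points by simp

lemma Min_points_in: "Min R \<in> R"
  using finite_points points_nonempty by simp

lemma points_range: "p \<in> R \<Longrightarrow> 0 \<le> p \<and> p < 2 * pi"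
  using points_subset by auto

lemma cyclic_next_cases:
  assumes "p \<in> R"
  obtains "cyclic_next R p \<in> R" "p < cyclic_next R p"
  | "cyclic_next R p = Min R + 2 * pi" "\<forall>q\<in>R. q \<le> p"
proof (cases "\<exists>q\<in>R. p < q")
  case True
  then have "Min {q\<in>R. p < q} \<in> {q\<in>R. p < q}"
    using finite_points by (intro Min_in) auto
  with True that(1) show ?thesis by (simp add: cyclic_next_def)
next
  case False
  with that(2) show ?thesis by (auto simp: cyclic_next_def not_less)
qed

lemma less_cyclic_next:
  assumes "p \<in> R" shows "p < cyclic_next R p"
  using assms points_range[OF assms] points_range[OF Min_points_in]
  by (cases rule: cyclic_next_cases) auto

lemma cyclic_next_le:
  assumes "p \<in> R" shows "cyclic_next R p \<le> Min R + 2 * pi"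
  using assms points_range[of "cyclic_next R p"] points_range[OF Min_points_in]
  by (cases rule: cyclic_next_cases) auto

lemma cyclic_next_le_greater: "p \<in> R \<Longrightarrow> q \<in> R \<Longrightarrow> p < q \<Longrightarrow> cyclic_next R p \<le> q"
  unfolding cyclic_next_def using finite_points by (auto intro!: Min_le)

lemma cyclic_gap_window:
  "p \<in> R \<Longrightarrow> p \<le> t \<Longrightarrow> t < cyclic_next R p \<Longrightarrow> Min R \<le> t \<and> t < Min R + 2 * pi"
  using Min_points_le cyclic_next_le by fastforce

lemma cyclic_gap_avoids_points:
  assumes "p \<in> R" "p < t" "t < cyclic_next R p" "s \<in> R"
  shows "t \<noteq> s" and "t \<noteq> s + 2 * pi"
  using assms cyclic_next_le_greater[of p s] cyclic_next_le[of p] Min_points_le[of s] by force+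

lemma cyclic_gaps_disjoint:
  assumes "p \<in> R" "q \<in> R" "p < s" "s < cyclic_next R p" "q < s" "s < cyclic_next R q"
  shows "p = q"
  using assms cyclic_next_le_greater[of p q] cyclic_next_le_greater[of q p]
  by (cases p q rule: linorder_cases) auto

end

definition wrap_angle :: "real \<Rightarrow> real \<Rightarrow> real" where
  "wrap_angle l t = t - 2 * pi * of_int \<lfloor>(t - l) / (2 * pi)\<rfloor>"

lemma wrap_angle_eq_shift: "wrap_angle l t = t + 2 * pi * of_int (- \<lfloor>(t - l) / (2 * pi)\<rfloor>)"
  by (simp add: wrap_angle_def)

lemma wrap_angle_window: "l \<le> wrap_angle l t \<and> wrap_angle l t < l + 2 * pi"
proof -
  define m where "m = \<lfloor>(t - l) / (2 * pi)\<rfloor>"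
  have "of_int m \<le> (t - l) / (2 * pi)" "(t - l) / (2 * pi) < of_int m + 1"
    unfolding m_def by linarith+
  then have "2 * pi * of_int m \<le> t - l" "t - l < 2 * pi * of_int m + 2 * pi"
    by (simp_all add: pos_le_divide_eq pos_divide_less_eq algebra_simps)
  then show ?thesis by (simp add: wrap_angle_def m_def)
qed

lemma inj_on_wrap_angle: "inj_on (wrap_angle l) {l'..<l' + 2 * pi}"
proof (rule inj_onI)
  fix s t assume st: "s \<in> {l'..<l' + 2 * pi}" "t \<in> {l'..<l' + 2 * pi}"
    and "wrap_angle l s = wrap_angle l t"
  define n where "n = \<lfloor>(s - l) / (2 * pi)\<rfloor> - \<lfloor>(t - l) / (2 * pi)\<rfloor>"
  have d: "s - t = 2 * pi * of_int n"
    using \<open>wrap_angle l s = _\<close> by (simp add: wrap_angle_def n_def algebra_simps)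
  moreover have "\<bar>s - t\<bar> < 2 * pi" using st by auto
  ultimately have "\<bar>of_int n\<bar> < (1::real)" by (simp add: abs_mult)
  then have "n = 0" by linarith
  then show "s = t" using d by simp
qed


lemma real_trig_poly_wrap_angle: "real_trig_poly a b k (wrap_angle l t) = real_trig_poly a b k t"
  by (simp only: wrap_angle_eq_shift real_trig_poly_periodic)

lemma zorder_trig_poly_wrap_angle:
  "zorder (trig_poly a b k) (complex_of_real (wrap_angle l t)) = zorder (trig_poly a b k) (complex_of_real t)"
  using zorder_trig_poly_periodic[of a b k "of_real t" "- \<lfloor>(t - l) / (2 * pi)\<rfloor>"]
  by (simp add: wrap_angle_eq_shift)

section \<open>Trigonometric polynomials with \<open>2k\<close> real roots\<close>

locale real_rooted_trig_poly =
  fixes A B :: "nat \<Rightarrow> real" and k :: nat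
  assumes k_pos: "k \<ge> 1"
    and finite_roots: "finite (real_roots (trig_poly A B k))"
    and root_count: "real_root_count (trig_poly A B k) = 2 * k"
begin

abbreviation "f \<equiv> real_trig_poly A B k"
abbreviation "f' \<equiv> real_trig_poly (deriv_cos_coeffs B) (deriv_sin_coeffs A) k"
abbreviation "root_order t \<equiv> zorder (trig_poly A B k) (complex_of_real t)"
abbreviation "crit_order t \<equiv>
  zorder (trig_poly (deriv_cos_coeffs B) (deriv_sin_coeffs A) k) (complex_of_real t)"

definition roots :: "real set" where
  "roots = real_roots (trig_poly A B k)"

lemma roots_eq: "roots = {p. 0 \<le> p \<and> p < 2 * pi \<and> f p = 0}"
  unfolding roots_def real_roots_def by (simp add: trig_poly_of_real)

lemma sum_nat_root_order: "(\<Sum>p\<in>roots. nat (root_order p)) = 2 * k"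
  using root_count by (simp add: real_root_count_def roots_def)

sublocale circle_points roots
proof
  show "finite roots" using finite_roots by (simp add: roots_def)
  show "roots \<subseteq> {0..<2 * pi}" by (auto simp: roots_eq)
  show "roots \<noteq> {}" using sum_nat_root_order k_pos by auto
qed

lemma root_zero: "p \<in> roots \<Longrightarrow> f p = 0"
  by (simp add: roots_eq)

lemma exists_nonroot: obtains t0 where "f t0 \<noteq> 0"
proof -
  have "infinite {0..<2 * pi}" by (rule infinite_Ico) simp
  then have "\<not> {0..<2 * pi} \<subseteq> roots"
    using finite_subset finite_points by blast
  with that show ?thesis by (auto simp: roots_eq)
qed

lemma root_order_pos_iff: "root_order t > 0 \<longleftrightarrow> f t = 0"
proof -
  obtain t0 where "f t0 \<noteq> 0" by (rule exists_nonroot)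
  then show ?thesis
    using zorder_trig_poly_pos_iff[of A B k "of_real t0" "of_real t"] by (simp add: trig_poly_of_real)
qed

lemma exists_noncritical: obtains t1 where "f' t1 \<noteq> 0"
proof -
  have "\<exists>t1. f' t1 \<noteq> 0"
  proof (rule ccontr)
    assume "\<nexists>t1. f' t1 \<noteq> 0"
    then have "\<forall>x. (f has_real_derivative 0) (at x)"
      using has_real_derivative_real_trig_poly[of A B k] by simp
    then have "f x = f y" for x y by (rule DERIV_isconst_all)
    moreover obtain t0 where "f t0 \<noteq> 0" by (rule exists_nonroot)
    ultimately show False using root_zero[OF Min_points_in] by metis
  qed
  with that show ?thesis by blast
qed

lemma crit_order_nonneg: "crit_order t \<ge> 0"
proof -
  obtain t1 where "f' t1 \<noteq> 0" by (rule exists_noncritical)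
  then show ?thesis
    using zorder_trig_poly[of "deriv_cos_coeffs B" "deriv_sin_coeffs A" k "of_real t1"]
    by (simp add: trig_poly_of_real)
qed

lemma crit_order_pos_iff: "crit_order t > 0 \<longleftrightarrow> f' t = 0"
proof -
  obtain t1 where "f' t1 \<noteq> 0" by (rule exists_noncritical)
  then show ?thesis
    using zorder_trig_poly_pos_iff[of "deriv_cos_coeffs B" "deriv_sin_coeffs A" k "of_real t1" "of_real t"]
    by (simp add: trig_poly_of_real)
qed

lemma critical_if_crit_order_nonzero: "crit_order t \<noteq> 0 \<Longrightarrow> f' t = 0"
  using crit_order_pos_iff[of t] crit_order_nonneg[of t] by linarith

lemma crit_order_root: "p \<in> roots \<Longrightarrow> crit_order p = root_order p - 1"
proof -
  assume "p \<in> roots"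
  obtain t0 where "f t0 \<noteq> 0" by (rule exists_nonroot)
  then have "\<exists>\<^sub>F w in at (complex_of_real p). trig_poly A B k w \<noteq> 0"
    using eventually_nonzero_trig_poly[of A B k "of_real t0"]
    by (intro eventually_frequently) (auto simp: trig_poly_of_real)
  moreover have "root_order p \<noteq> 0"
    using root_order_pos_iff[of p] root_zero[OF \<open>p \<in> roots\<close>] by simp
  ultimately show ?thesis
    using zorder_deriv_minus_1[of "trig_poly A B k" "of_real p"]
    by (simp add: deriv_trig_poly isolated_singularity_at_analytic not_essential_analytic
        trig_poly_analytic)
qed

lemma sum_crit_order_window_le:
  assumes "finite X" "X \<subseteq> {l..<l + 2 * pi}"
  shows "(\<Sum>t\<in>X. crit_order t) \<le> 2 * int k"
proof -
  obtain t1 where "f' t1 \<noteq> 0" by (rule exists_noncritical)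
  then have "(\<Sum>z\<in>complex_of_real ` X. zorder (trig_poly (deriv_cos_coeffs B) (deriv_sin_coeffs A) k) z)
      \<le> 2 * int k"
    using assms inj_on_subset[OF inj_on_exp_window image_mono[OF assms(2)]]
    by (intro sum_zorder_trig_poly_le[of _ _ _ "of_real t1"]) (auto simp: trig_poly_of_real)
  then show ?thesis by (simp add: sum.reindex inj_on_def)
qed

lemma root_cyclic_next:
  assumes "p \<in> roots" shows "f (cyclic_next roots p) = 0"
  using assms real_trig_poly_periodic_2pi[of A B k "Min roots"] root_zero Min_points_in
  by (cases rule: cyclic_next_cases) auto

lemma exists_rolle_point: "p \<in> roots \<Longrightarrow> \<exists>w. p < w \<and> w < cyclic_next roots p \<and> f' w = 0"
proof -
  assume p: "p \<in> roots"
  have "f differentiable at x" for x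
    using has_real_derivative_real_trig_poly real_differentiable_def by blast
  then have "\<exists>w>p. w < cyclic_next roots p \<and> (f has_real_derivative 0) (at w)"
    using less_cyclic_next[OF p] root_zero[OF p] root_cyclic_next[OF p]
    by (intro Rolle) (auto intro: continuous_on_real_trig_poly)
  then show ?thesis
    using DERIV_unique[OF has_real_derivative_real_trig_poly] by blast
qed

definition rolle_point :: "real \<Rightarrow> real" where
  "rolle_point p = (SOME w. p < w \<and> w < cyclic_next roots p \<and> f' w = 0)"

lemma rolle_point:
  "p \<in> roots \<Longrightarrow> p < rolle_point p \<and> rolle_point p < cyclic_next roots p \<and> f' (rolle_point p) = 0"
  unfolding rolle_point_def by (rule someI_ex) (rule exists_rolle_point)

lemma inj_on_rolle_point: "inj_on rolle_point roots"
  by (rule inj_onI) (metis cyclic_gaps_disjoint rolle_point)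

lemma rolle_point_not_root: "p \<in> roots \<Longrightarrow> rolle_point p \<notin> roots"
  using cyclic_gap_avoids_points(1) rolle_point by blast

lemma roots_rolle_points_window:
  "roots \<union> rolle_point ` roots \<subseteq> {Min roots..<Min roots + 2 * pi}"
  using cyclic_gap_window rolle_point by (fastforce simp: less_imp_le)

text \<open>Compared with \<open>sum_crit_order_window_le\<close>, this leaves room for neither multiple Rolle
  points nor further critical points.\<close>
lemma sum_crit_order_roots_rolle_points:
  "(\<Sum>t\<in>roots \<union> rolle_point ` roots. crit_order t)
     = 2 * int k - int (card roots) + (\<Sum>p\<in>roots. crit_order (rolle_point p))"
proof -
  have "root_order p \<ge> 0" if "p \<in> roots" for p
    using root_order_pos_iff[of p] root_zero[OF that] by linarith
  then have "(\<Sum>p\<in>roots. root_order p) = (\<Sum>p\<in>roots. int (nat (root_order p)))"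
    by (intro sum.cong) auto
  also have "\<dots> = 2 * int k"
    unfolding of_nat_sum[symmetric] sum_nat_root_order by simp
  finally have "(\<Sum>p\<in>roots. crit_order p) = 2 * int k - int (card roots)"
    by (simp add: crit_order_root sum_subtractf)
  then show ?thesis
    using finite_points rolle_point_not_root
    by (subst sum.union_disjoint) (auto simp: sum.reindex[OF inj_on_rolle_point])
qed

lemma crit_order_rolle_point_ge_1: "p \<in> roots \<Longrightarrow> crit_order (rolle_point p) \<ge> 1"
  using rolle_point[of p] crit_order_pos_iff[of "rolle_point p"] by linarith

lemma crit_order_rolle_point: "p \<in> roots \<Longrightarrow> crit_order (rolle_point p) = 1"
proof -
  assume "p \<in> roots"
  have "(\<Sum>q\<in>roots. crit_order (rolle_point q) - 1) \<le> 0"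
    using sum_crit_order_window_le[OF _ roots_rolle_points_window] finite_points
    by (simp add: sum_crit_order_roots_rolle_points sum_subtractf)
  moreover have "crit_order (rolle_point p) - 1 \<le> (\<Sum>q\<in>roots. crit_order (rolle_point q) - 1)"
    using crit_order_rolle_point_ge_1 \<open>p \<in> roots\<close> finite_points
    by (intro member_le_sum) (auto simp: int_one_le_iff_zero_less)
  ultimately show ?thesis
    using crit_order_rolle_point_ge_1[OF \<open>p \<in> roots\<close>] by linarith
qed

lemma sum_crit_order_roots_rolle_points_ge: "(\<Sum>t\<in>roots \<union> rolle_point ` roots. crit_order t) \<ge> 2 * int k"
  using crit_order_rolle_point_ge_1 finite_points
  by (simp add: sum_crit_order_roots_rolle_points sum_bounded_below[where K = 1, simplified])

lemma critical_point_in_window: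
  assumes "Min roots \<le> t" "t < Min roots + 2 * pi" "f' t = 0"
  shows "t \<in> roots \<union> rolle_point ` roots"
proof (rule ccontr)
  let ?X = "roots \<union> rolle_point ` roots"
  assume "t \<notin> ?X"
  have "(\<Sum>s\<in>insert t ?X. crit_order s) \<le> 2 * int k"
    using assms roots_rolle_points_window finite_points by (intro sum_crit_order_window_le) auto
  moreover note sum_crit_order_roots_rolle_points_ge
  moreover have "crit_order t \<ge> 1" using crit_order_pos_iff[of t] assms(3) by linarith
  ultimately show False using \<open>t \<notin> ?X\<close> finite_points by simp
qed


lemma critical_point_in_gap:
  assumes "p \<in> roots" "p < s" "s < cyclic_next roots p" "f' s = 0"
  shows "s = rolle_point p"
proof -
  have "s \<in> roots \<union> rolle_point ` roots"
    using assms cyclic_gap_window[of p s] by (intro critical_point_in_window) auto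
  moreover have "s \<notin> roots" using assms cyclic_gap_avoids_points(1) by blast
  ultimately obtain q where "q \<in> roots" "s = rolle_point q" by blast
  then show ?thesis using assms rolle_point[of q] cyclic_gaps_disjoint[of p q s] by auto
qed

lemma critical_point_extremum_in_window:
  assumes "Min roots \<le> t" "t < Min roots + 2 * pi" "f' t = 0" "f t \<noteq> 0"
  shows "crit_order t = 1 \<and> ((strict_local_max f t \<and> f t > 0) \<or> (strict_local_min f t \<and> f t < 0))"
proof -
  obtain p where p: "p \<in> roots" "t = rolle_point p"
    using critical_point_in_window[OF assms(1-3)] root_zero assms(4) by blast
  define n where "n = cyclic_next roots p"
  have "p < t" "t < n" using rolle_point[OF p(1)] p(2) n_def by auto
  have "f p = 0" "f n = 0" using root_zero[OF p(1)] root_cyclic_next[OF p(1)] n_def by auto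
  have noncritical: "f' s \<noteq> 0" if "p < s" "s < n" "s \<noteq> t" for s
    using critical_point_in_gap[OF p(1)] that p(2) n_def by blast
  have mono_left: "strict_mono_on {p..t} f \<or> strict_antimono_on {p..t} f"
    by (rule DERIV_nonzero_imp_strict_mono_or_antimono[OF \<open>p < t\<close>
          has_real_derivative_real_trig_poly isCont_real_trig_poly])
       (use noncritical \<open>t < n\<close> in auto)
  have mono_right: "strict_mono_on {t..n} f \<or> strict_antimono_on {t..n} f"
    by (rule DERIV_nonzero_imp_strict_mono_or_antimono[OF \<open>t < n\<close>
          has_real_derivative_real_trig_poly isCont_real_trig_poly])
       (use noncritical \<open>p < t\<close> in auto)
  show ?thesis
  proof (cases "f t > 0")
    case True
    then have "strict_mono_on {p..t} f" "strict_antimono_on {t..n} f"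
      using mono_left mono_right \<open>p < t\<close> \<open>t < n\<close> \<open>f p = 0\<close> \<open>f n = 0\<close>
      by (auto dest: monotone_onD[of _ _ _ _ p t] monotone_onD[of _ _ _ _ t n])
    then show ?thesis
      using True strict_local_maxI[OF \<open>p < t\<close> \<open>t < n\<close>] crit_order_rolle_point p by blast
  next
    case False
    then have "f t < 0" using assms(4) by simp
    then have "strict_antimono_on {p..t} f" "strict_mono_on {t..n} f"
      using mono_left mono_right \<open>p < t\<close> \<open>t < n\<close> \<open>f p = 0\<close> \<open>f n = 0\<close>
      by (auto dest: monotone_onD[of _ _ _ _ p t] monotone_onD[of _ _ _ _ t n])
    then show ?thesis
      using \<open>f t < 0\<close> strict_local_minI[OF \<open>p < t\<close> \<open>t < n\<close>] crit_order_rolle_point p by blast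
  qed
qed

lemma critical_point_extremum:
  assumes "f' t = 0" "f t \<noteq> 0"
  shows "crit_order t = 1 \<and> ((strict_local_max f t \<and> f t > 0) \<or> (strict_local_min f t \<and> f t < 0))"
proof -
  define t' where "t' = wrap_angle (Min roots) t"
  have "strict_local_max f t' \<longleftrightarrow> strict_local_max f t"
    and "strict_local_min f t' \<longleftrightarrow> strict_local_min f t"
    unfolding t'_def wrap_angle_eq_shift
    by (rule strict_local_extremum_periodic, rule real_trig_poly_periodic)+
  then show ?thesis
    using critical_point_extremum_in_window[of t'] wrap_angle_window[of "Min roots" t] assms
    by (simp add: t'_def real_trig_poly_wrap_angle zorder_trig_poly_wrap_angle)
qed


definition critical_points :: "real set" where
  "critical_points = {t. 0 \<le> t \<and> t < 2 * pi \<and> f' t = 0}"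

lemma finite_critical_points: "finite critical_points"
proof -
  have "card G \<le> 2 * k" if G: "G \<subseteq> critical_points" "finite G" for G
  proof -
    have "int (card G) = (\<Sum>t\<in>G. 1)" by simp
    also have "\<dots> \<le> (\<Sum>t\<in>G. crit_order t)"
      using G crit_order_pos_iff by (intro sum_mono) (force simp: critical_points_def)
    also have "\<dots> \<le> 2 * int k"
      using G by (intro sum_crit_order_window_le[of G 0]) (auto simp: critical_points_def)
    finally show ?thesis by linarith
  qed
  then show ?thesis
    using finite_if_finite_subsets_card_bdd by blast
qed

lemma sum_crit_order_critical_points: "(\<Sum>t\<in>critical_points. crit_order t) \<ge> 2 * int k"
proof -
  define X where "X = {t \<in> roots \<union> rolle_point ` roots. f' t = 0}"
  have "X \<subseteq> {Min roots..<Min roots + 2 * pi}"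
    using roots_rolle_points_window by (auto simp: X_def)
  then have inj: "inj_on (wrap_angle 0) X"
    using inj_on_subset[OF inj_on_wrap_angle] by blast
  have "2 * int k \<le> (\<Sum>t\<in>roots \<union> rolle_point ` roots. crit_order t)"
    by (rule sum_crit_order_roots_rolle_points_ge)
  also have "\<dots> = (\<Sum>t\<in>X. crit_order t)"
    by (rule sum.mono_neutral_right) (auto simp: X_def finite_points critical_if_crit_order_nonzero)
  also have "\<dots> = (\<Sum>t\<in>wrap_angle 0 ` X. crit_order t)"
    by (simp add: sum.reindex[OF inj] zorder_trig_poly_wrap_angle)
  also have "\<dots> \<le> (\<Sum>t\<in>critical_points. crit_order t)"
  proof (rule sum_mono2[OF finite_critical_points])
    show "wrap_angle 0 ` X \<subseteq> critical_points"
      using wrap_angle_window[of 0] by (auto simp: X_def critical_points_def real_trig_poly_wrap_angle)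
    show "0 \<le> crit_order t" if "t \<in> critical_points - wrap_angle 0 ` X" for t
      using that crit_order_pos_iff[of t] by (simp add: critical_points_def)
  qed
  finally show ?thesis .
qed

end

section \<open>Two hyperbolic levels\<close>

lemma crossing_between_extrema:
  fixes g :: "real \<Rightarrow> real"
  assumes "t < n" and cont: "continuous_on {t..n} g"
    and mono: "strict_mono_on {t..n} g \<or> strict_antimono_on {t..n} g"
    and ext_t: "(strict_local_max g t \<and> \<beta> \<le> g t) \<or> (strict_local_min g t \<and> g t \<le> \<alpha>)"
    and ext_n: "(strict_local_max g n \<and> \<beta> \<le> g n) \<or> (strict_local_min g n \<and> g n \<le> \<alpha>)"
    and "\<alpha> < \<gamma>" "\<gamma> < \<beta>"
  shows "\<exists>s. t < s \<and> s < n \<and> g s = \<gamma>"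
  using mono
proof
  assume "strict_mono_on {t..n} g"
  then have "g t \<le> \<alpha>" "\<beta> \<le> g n"
    using strict_mono_on_not_extremum[OF \<open>t < n\<close>] ext_t ext_n by auto
  then obtain s where "t \<le> s" "s \<le> n" "g s = \<gamma>"
    using IVT'[where y = \<gamma>, OF _ _ _ cont] \<open>t < n\<close> \<open>\<alpha> < \<gamma>\<close> \<open>\<gamma> < \<beta>\<close> by force
  with \<open>g t \<le> \<alpha>\<close> \<open>\<beta> \<le> g n\<close> \<open>\<alpha> < \<gamma>\<close> \<open>\<gamma> < \<beta>\<close> show ?thesis
    by (metis order_le_less not_less)
next
  assume "strict_antimono_on {t..n} g"
  then have "\<beta> \<le> g t" "g n \<le> \<alpha>"
    using strict_antimono_on_not_extremum[OF \<open>t < n\<close>] ext_t ext_n by auto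
  then obtain s where "t \<le> s" "s \<le> n" "g s = \<gamma>"
    using IVT2'[where y = \<gamma>, OF _ _ _ cont] \<open>t < n\<close> \<open>\<alpha> < \<gamma>\<close> \<open>\<gamma> < \<beta>\<close> by force
  with \<open>\<beta> \<le> g t\<close> \<open>g n \<le> \<alpha>\<close> \<open>\<alpha> < \<gamma>\<close> \<open>\<gamma> < \<beta>\<close> show ?thesis
    by (metis order_le_less not_less)
qed

text \<open>The crossings are found one in each gap between consecutive critical points.\<close>
lemma level_crossings:
  fixes g g' :: "real \<Rightarrow> real"
  assumes deriv: "\<And>x. (g has_real_derivative g' x) (at x)" and cont: "\<And>x. isCont g' x"
    and periodic: "\<And>x. g' (x + 2 * pi) = g' x"
    and Z: "Z = {t. 0 \<le> t \<and> t < 2 * pi \<and> g' t = 0}" "finite Z" "Z \<noteq> {}"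
    and extremal: "\<And>t. g' t = 0 \<Longrightarrow> (strict_local_max g t \<and> \<beta> \<le> g t) \<or> (strict_local_min g t \<and> g t \<le> \<alpha>)"
    and "\<alpha> < \<gamma>" "\<gamma> < \<beta>"
  obtains Y l where "finite Y" "card Z \<le> card Y" "Y \<subseteq> {l..<l + 2 * pi}" "\<forall>s\<in>Y. g s = \<gamma>"
proof -
  interpret circle_points Z using Z by unfold_locales auto
  have gap_noncritical: "g' s \<noteq> 0" if t: "t \<in> Z" "t < s" "s < cyclic_next Z t" for t s
  proof
    assume "g' s = 0"
    then have "s \<in> Z \<or> s - 2 * pi \<in> Z"
      using t points_range[OF t(1)] cyclic_next_le[OF t(1)] points_range[OF Min_points_in]
        periodic[of "s - 2 * pi"] Z(1) by auto
    then show False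
      using cyclic_gap_avoids_points[OF t] by force
  qed
  have crit_next: "g' (cyclic_next Z t) = 0" if "t \<in> Z" for t
    using that Min_points_in periodic[of "Min Z"] Z(1) by (cases rule: cyclic_next_cases) auto
  have "\<exists>s. t < s \<and> s < cyclic_next Z t \<and> g s = \<gamma>" if "t \<in> Z" for t
  proof (rule crossing_between_extrema)
    show "t < cyclic_next Z t" by (rule less_cyclic_next[OF that])
    show "continuous_on {t..cyclic_next Z t} g"
      using deriv by (meson DERIV_isCont continuous_at_imp_continuous_on)
    show "strict_mono_on {t..cyclic_next Z t} g \<or> strict_antimono_on {t..cyclic_next Z t} g"
      by (rule DERIV_nonzero_imp_strict_mono_or_antimono[OF less_cyclic_next[OF that] deriv cont])
         (use gap_noncritical that in auto)
  qed (use extremal crit_next that Z(1) \<open>\<alpha> < \<gamma>\<close> \<open>\<gamma> < \<beta>\<close> in auto)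
  then obtain \<sigma> where \<sigma>: "\<forall>t\<in>Z. t < \<sigma> t \<and> \<sigma> t < cyclic_next Z t \<and> g (\<sigma> t) = \<gamma>"
    by metis
  have "inj_on \<sigma> Z"
    by (rule inj_onI) (metis cyclic_gaps_disjoint \<sigma>)
  show ?thesis
  proof (rule that[of "\<sigma> ` Z" "Min Z"])
    show "finite (\<sigma> ` Z)" using Z(2) by simp
    show "card Z \<le> card (\<sigma> ` Z)" using card_image[OF \<open>inj_on \<sigma> Z\<close>] by simp
    show "\<sigma> ` Z \<subseteq> {Min Z..<Min Z + 2 * pi}"
      using \<sigma> cyclic_gap_window by (fastforce simp: less_imp_le)
    show "\<forall>s\<in>\<sigma> ` Z. g s = \<gamma>" using \<sigma> by auto
  qed
qed


locale two_levels =
  fixes A B :: "nat \<Rightarrow> real" and k :: nat and a b :: real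
  assumes lower: "real_rooted_trig_poly (A(0 := A 0 - a)) B k"
    and upper: "real_rooted_trig_poly (A(0 := A 0 - b)) B k"
    and levels: "a < b"
begin

sublocale lower: real_rooted_trig_poly "A(0 := A 0 - a)" B k by (rule lower)
sublocale upper: real_rooted_trig_poly "A(0 := A 0 - b)" B k by (rule upper)

abbreviation "h \<equiv> real_trig_poly A B k"
abbreviation "h' \<equiv> real_trig_poly (deriv_cos_coeffs B) (deriv_sin_coeffs A) k"

lemma critical_point_outside_levels:
  assumes "h' t = 0"
  shows "zorder (trig_poly (deriv_cos_coeffs B) (deriv_sin_coeffs A) k) (complex_of_real t) = 1
    \<and> ((strict_local_max h t \<and> b \<le> h t) \<or> (strict_local_min h t \<and> h t \<le> a))"
proof -
  have lower_ext: "h t \<noteq> a \<Longrightarrow> zorder (trig_poly (deriv_cos_coeffs B) (deriv_sin_coeffs A) k) (complex_of_real t) = 1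
      \<and> ((strict_local_max h t \<and> h t > a) \<or> (strict_local_min h t \<and> h t < a))"
    using lower.critical_point_extremum[of t] assms by (simp add: real_trig_poly_minus_const)
  have upper_ext: "h t \<noteq> b \<Longrightarrow> zorder (trig_poly (deriv_cos_coeffs B) (deriv_sin_coeffs A) k) (complex_of_real t) = 1
      \<and> ((strict_local_max h t \<and> h t > b) \<or> (strict_local_min h t \<and> h t < b))"
    using upper.critical_point_extremum[of t] assms by (simp add: real_trig_poly_minus_const)
  show ?thesis
    using lower_ext upper_ext levels not_strict_local_max_and_min[of h t]
    by (cases "h t = a"; cases "h t = b") force+
qed

lemma card_critical_points: "2 * k \<le> card {t. 0 \<le> t \<and> t < 2 * pi \<and> h' t = 0}"
proof -
  have "2 * int k \<le> (\<Sum>t\<in>{t. 0 \<le> t \<and> t < 2 * pi \<and> h' t = 0}. 1)"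
    using lower.sum_crit_order_critical_points critical_point_outside_levels
    by (simp add: lower.critical_points_def)
  then show ?thesis by simp
qed

lemma level_set_real:
  assumes "trig_poly A B k z = of_real c" "a < c" "c < b"
  shows "Im z = 0"
proof -
  let ?Z = "{t. 0 \<le> t \<and> t < 2 * pi \<and> h' t = 0}"
  have "card ?Z \<noteq> 0"
    using card_critical_points upper.k_pos by linarith
  then have "?Z \<noteq> {}" by (metis card.empty)
  have "finite ?Z"
    using lower.finite_critical_points by (simp add: lower.critical_points_def)
  obtain Y l where Y: "finite Y" "card ?Z \<le> card Y" "Y \<subseteq> {l..<l + 2 * pi}" "\<forall>s\<in>Y. h s = c"
  proof (rule level_crossings[of h h' ?Z b a c])
    show "(h has_real_derivative h' x) (at x)" for x
      by (rule has_real_derivative_real_trig_poly)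
    show "(strict_local_max h t \<and> b \<le> h t) \<or> (strict_local_min h t \<and> h t \<le> a)" if "h' t = 0" for t
      using critical_point_outside_levels[OF that] by blast
  qed (use \<open>finite ?Z\<close> \<open>?Z \<noteq> {}\<close> assms(2,3) isCont_real_trig_poly real_trig_poly_periodic_2pi in auto)
  have "trig_poly (A(0 := A 0 - c)) B k (of_real (Min upper.roots)) \<noteq> 0"
    using upper.root_zero[OF upper.Min_points_in] assms(3)
    by (simp add: trig_poly_of_real real_trig_poly_minus_const)
  then show ?thesis
  proof (rule trig_poly_zero_real_if_many_real_zeros)
    show "\<forall>s\<in>Y. trig_poly (A(0 := A 0 - c)) B k (complex_of_real s) = 0"
      using Y(4) by (simp add: trig_poly_of_real real_trig_poly_minus_const)
    show "trig_poly (A(0 := A 0 - c)) B k z = 0"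
      using assms(1) by (simp flip: trig_poly_minus_const)
  qed (use Y card_critical_points in auto)
qed

end

definition inner_coeffs :: "real \<times> real \<Rightarrow> (nat \<Rightarrow> real) \<Rightarrow> (nat \<Rightarrow> real) \<Rightarrow> nat \<Rightarrow> real" where
  "inner_coeffs u c1 c2 j = fst u * c1 j + snd u * c2 j"

lemma trig_poly_inner_coeffs:
  "of_real (fst u) * trig_poly a1 b1 k z + of_real (snd u) * trig_poly a2 b2 k z
     = trig_poly (inner_coeffs u a1 a2) (inner_coeffs u b1 b2) k z"
  unfolding trig_poly_def inner_coeffs_def sum_distrib_left sum.distrib[symmetric]
  by (intro sum.cong) (auto simp: algebra_simps)

lemma hyperbolic_pt_imp_real_rooted:
  assumes "hyperbolic_pt a1 b1 a2 b2 k x" "u \<noteq> 0" "k \<ge> 1"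
  shows "real_rooted_trig_poly ((inner_coeffs u a1 a2)(0 := inner_coeffs u a1 a2 0 - u \<bullet> x))
    (inner_coeffs u b1 b2) k"
proof -
  let ?g = "\<lambda>z. complex_of_real (fst u) * trig_poly a1 b1 k z
              + complex_of_real (snd u) * trig_poly a2 b2 k z - complex_of_real (u \<bullet> x)"
  have "finite (real_roots ?g) \<and> real_root_count ?g = 2 * k"
    using assms(1,2) unfolding hyperbolic_pt_def Let_def by blast
  moreover have "?g = trig_poly ((inner_coeffs u a1 a2)(0 := inner_coeffs u a1 a2 0 - u \<bullet> x))
      (inner_coeffs u b1 b2) k"
    by (simp add: fun_eq_iff trig_poly_inner_coeffs trig_poly_minus_const)
  ultimately show ?thesis using assms(3) by unfold_locales simp_all
qed

lemma theta_diff: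
  "theta a1 b1 a2 b2 k x z - theta a1 b1 a2 b2 k y z
     = of_real ((x - y) \<bullet> (x + y)) - 2 * trig_poly (inner_coeffs (x - y) a1 a2) (inner_coeffs (x - y) b1 b2) k z"
  unfolding theta_def trig_poly_inner_coeffs[symmetric]
  by (simp add: inner_prod_def power2_eq_square algebra_simps)

theorem proposition12:
  fixes a1 b1 a2 b2 :: "nat \<Rightarrow> real" and k :: nat and x y :: "real \<times> real"
  assumes "k \<ge> 1"
    and "has_trig_degree a1 b1 k" and "has_trig_degree a2 b2 k"
    and "hyperbolic_pt a1 b1 a2 b2 k x" and "hyperbolic_pt a1 b1 a2 b2 k y"
    and "x \<noteq> y"
  shows "\<forall>z::complex. theta a1 b1 a2 b2 k x z - theta a1 b1 a2 b2 k y z = 0 \<longrightarrow> Im z = 0"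
proof (intro allI impI)
  fix z :: complex
  assume "theta a1 b1 a2 b2 k x z - theta a1 b1 a2 b2 k y z = 0"
  define u where "u = x - y"
  have "u \<noteq> 0" using \<open>x \<noteq> y\<close> by (simp add: u_def)
  moreover have "u \<bullet> x - u \<bullet> y = u \<bullet> u"
    by (simp add: u_def inner_diff_left inner_diff_right inner_commute)
  ultimately have "u \<bullet> y < u \<bullet> x"
    using inner_gt_zero_iff[of u] by linarith
  interpret two_levels "inner_coeffs u a1 a2" "inner_coeffs u b1 b2" k "u \<bullet> y" "u \<bullet> x"
    using hyperbolic_pt_imp_real_rooted[OF assms(4) \<open>u \<noteq> 0\<close> assms(1)]
      hyperbolic_pt_imp_real_rooted[OF assms(5) \<open>u \<noteq> 0\<close> assms(1)] \<open>u \<bullet> y < u \<bullet> x\<close>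
    by (simp add: two_levels_def)
  have "trig_poly (inner_coeffs u a1 a2) (inner_coeffs u b1 b2) k z = of_real ((u \<bullet> y + u \<bullet> x) / 2)"
    using \<open>theta _ _ _ _ k x z - theta _ _ _ _ k y z = 0\<close>
    by (simp add: theta_diff u_def inner_add_right field_simps)
  then show "Im z = 0"
    by (rule level_set_real) (use \<open>u \<bullet> y < u \<bullet> x\<close> in auto)
qed

end
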